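(* For any graph \(G\), \(OPT(G)\geq 2LP(G)-MM(G)\).
   Context: All graphs are finite, undirected and simple. \(OPT(G)\) is the minimum size of a vertex cover of \(G\) (a set of vertices containing at least one end-point of each edge). \(MM(G)\) is the size of a maximum matching of \(G\). \(LP(G)\) is the optimum value of the linear program: minimize \(\sum_{v\in V(G)}x_v\) subject to \(x_u+x_v\ge 1\) for every edge \(\{u,v\}\in E(G)\) and \(0\le x_v\le 1\) for every \(v\in V(G)\). *)

theory Defs
  imports Complex_Main
begin

definition graph :: "'a set \<Rightarrow> 'a set set \<Rightarrow> bool" where
  "graph V E \<longleftrightarrow> finite V \<and> (\<forall>e\<in>E. \<exists>u v. e = {u, v} \<and> u \<noteq> v \<and> u \<in> V \<and> v \<in> V)"

definition vertex_cover :: "'a set \<Rightarrow> 'a set set \<Rightarrow> 'a set \<Rightarrow> bool" where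
  "vertex_cover V E C \<longleftrightarrow> C \<subseteq> V \<and> (\<forall>e\<in>E. e \<inter> C \<noteq> {})"

definition matching :: "'a set set \<Rightarrow> 'a set set \<Rightarrow> bool" where
  "matching E M \<longleftrightarrow> M \<subseteq> E \<and> (\<forall>e1\<in>M. \<forall>e2\<in>M. e1 \<noteq> e2 \<longrightarrow> e1 \<inter> e2 = {})"

definition OPT :: "'a set \<Rightarrow> 'a set set \<Rightarrow> nat" where
  "OPT V E = Min {card C | C. vertex_cover V E C}"

definition MM :: "'a set \<Rightarrow> 'a set set \<Rightarrow> nat" where
  "MM V E = Max {card M | M. matching E M}"

definition lp_feasible :: "'a set \<Rightarrow> 'a set set \<Rightarrow> ('a \<Rightarrow> real) \<Rightarrow> bool" where
  "lp_feasible V E x \<longleftrightarrow> (\<forall>u v. {u, v} \<in> E \<longrightarrow> x u + x v \<ge> 1) \<and> (\<forall>v\<in>V. 0 \<le> x v \<and> x v \<le> 1)"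

text \<open>Optimum value of the vertex-cover LP relaxation (the minimum exists; we take the infimum).\<close>
definition LP :: "'a set \<Rightarrow> 'a set set \<Rightarrow> real" where
  "LP V E = Inf {(\<Sum>v\<in>V. x v) | x. lp_feasible V E x}"

end

theory Submission imports Defs begin

text \<open>Take a minimum vertex cover \<open>C\<close> and the bipartite graph of edges between \<open>C\<close> and
  \<open>V - C\<close>. By the deficiency version of Hall's theorem there are \<open>S \<subseteq> C\<close> and a matching of
  size at least \<open>|C| - |S| + |N(S)|\<close>, where \<open>N(S)\<close> is the set of neighbours of \<open>S\<close> outside
  \<open>C\<close>. Putting \<open>x = 1\<close> on \<open>C - S\<close> and \<open>x = 1/2\<close> on \<open>S \<union> N(S)\<close> gives a feasible LP
  solution of value \<open>|C| - |S|/2 + |N(S)|/2\<close>, hence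
  \<open>2 LP \<le> |C| + (|C| - |S| + |N(S)|) \<le> OPT + MM\<close>.\<close>

definition bipartite_matching :: "('a \<times> 'b) set \<Rightarrow> 'a set \<Rightarrow> ('a \<times> 'b) set \<Rightarrow> bool" where
  "bipartite_matching R A P \<longleftrightarrow> P \<subseteq> R \<inter> (A \<times> UNIV) \<and> inj_on fst P \<and> inj_on snd P"

definition deficiency :: "('a \<times> 'b) set \<Rightarrow> 'a set \<Rightarrow> int" where
  "deficiency R S = int (card S) - int (card (R `` S))"

lemma deficiency_empty [simp]: "deficiency R {} = 0"
  by (simp add: deficiency_def)

lemma ex_max_deficiency:
  assumes "finite A"
  obtains S0 where "S0 \<subseteq> A" "\<And>S. S \<subseteq> A \<Longrightarrow> deficiency R S \<le> deficiency R S0"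
proof -
  have fin: "finite (deficiency R ` Pow A)" using assms by simp
  then have "Max (deficiency R ` Pow A) \<in> deficiency R ` Pow A" by (intro Max_in) auto
  then obtain S0 where "S0 \<subseteq> A" "deficiency R S0 = Max (deficiency R ` Pow A)" by auto
  with fin show thesis by (intro that) auto
qed

lemma deficiency_remove_Image:
  assumes "finite R" "finite S" "finite T" "S \<inter> T = {}"
  shows "deficiency {p \<in> R. snd p \<notin> R `` S} T = deficiency R (S \<union> T) - deficiency R S"
proof -
  have "{p \<in> R. snd p \<notin> R `` S} `` T = R `` T - R `` S" by force
  moreover have "card (R `` (S \<union> T)) = card (R `` S) + card (R `` T - R `` S)"
    using assms(1) by (subst card_Un_disjoint[symmetric]) (auto simp: Image_Un finite_Image)
  moreover have "card (S \<union> T) = card S + card T" using assms(2-4) by (rule card_Un_disjoint)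
  ultimately show ?thesis by (simp add: deficiency_def)
qed

lemma deficiency_remove_target:
  assumes "finite R"
  shows "deficiency {p \<in> R. snd p \<noteq> b} U \<le> deficiency R U + 1"
proof -
  have "{p \<in> R. snd p \<noteq> b} `` U = R `` U - {b}" by force
  then have "card (R `` U) \<le> card ({p \<in> R. snd p \<noteq> b} `` U) + 1"
    using finite_Image[OF assms, of U] by (cases "b \<in> R `` U") (auto simp: card_Diff_singleton_if)
  then show ?thesis by (simp add: deficiency_def)
qed

lemma bipartite_matching_finite:
  "bipartite_matching R A P \<Longrightarrow> finite R \<Longrightarrow> finite P"
  unfolding bipartite_matching_def by (blast intro: finite_subset)

lemma bipartite_matching_Un:
  assumes P1: "bipartite_matching R S P1"
    and P2: "bipartite_matching {p \<in> R. snd p \<notin> R `` S} T P2"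
    and "S \<inter> T = {}"
  shows "bipartite_matching R (S \<union> T) (P1 \<union> P2)" and "P1 \<inter> P2 = {}"
proof -
  have "fst ` P1 \<subseteq> S" "snd ` P1 \<subseteq> R `` S" using P1 by (force simp: bipartite_matching_def)+
  moreover have "fst ` P2 \<subseteq> T" "snd ` P2 \<inter> R `` S = {}" using P2 by (force simp: bipartite_matching_def)+
  ultimately have "fst ` P1 \<inter> fst ` P2 = {}" "snd ` P1 \<inter> snd ` P2 = {}" using \<open>S \<inter> T = {}\<close> by blast+
  then show "bipartite_matching R (S \<union> T) (P1 \<union> P2)" and "P1 \<inter> P2 = {}"
    using P1 P2 by (auto simp: bipartite_matching_def inj_on_Un)
qed

lemma bipartite_matching_insert:
  assumes "bipartite_matching {p \<in> R. snd p \<noteq> b} (A - {a}) P" "(a, b) \<in> R" "a \<in> A"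
  shows "bipartite_matching R A (insert (a, b) P)" and "(a, b) \<notin> P"
  using assms by (force simp: bipartite_matching_def)+

text \<open>Induction step when the deficiency is maximised by a nonempty proper subset \<open>S1\<close>: match
  \<open>S1\<close> into its neighbourhood and \<open>A - S1\<close> into the remaining targets. Maximality of \<open>S1\<close>
  makes both parts Hall-type, i.e.\ free of deficiency.\<close>
lemma bipartite_matching_Un_deficiency:
  assumes "finite A" "finite R" "S1 \<subseteq> A"
    and max: "\<And>S. S \<subseteq> A \<Longrightarrow> deficiency R S \<le> deficiency R S1"
    and U: "U \<subseteq> S1" "bipartite_matching R S1 P1" "int (card S1) - deficiency R U \<le> int (card P1)"
    and T: "T \<subseteq> A - S1" "bipartite_matching {p \<in> R. snd p \<notin> R `` S1} (A - S1) P2"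
      "int (card (A - S1)) - deficiency {p \<in> R. snd p \<notin> R `` S1} T \<le> int (card P2)"
  shows "bipartite_matching R A (P1 \<union> P2)"
    and "int (card A) - deficiency R S1 \<le> int (card (P1 \<union> P2))"
proof -
  have fin: "finite S1" "finite T" using assms(1,3) T(1) finite_subset by blast+
  have "deficiency R U \<le> deficiency R S1" using max U(1) assms(3) by auto
  then have "int (card (R `` S1)) \<le> int (card P1)" using U(3) by (simp add: deficiency_def)
  moreover have "S1 \<inter> T = {}" "S1 \<union> T \<subseteq> A" using T(1) assms(3) by blast+
  then have "deficiency {p \<in> R. snd p \<notin> R `` S1} T \<le> 0"
    using deficiency_remove_Image[OF \<open>finite R\<close> fin] max[of "S1 \<union> T"] by simp
  moreover have "card A = card (A - S1) + card S1"
    using assms(1,3) fin(1) by (simp add: card_Diff_subset card_mono)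
  moreover have "P1 \<inter> P2 = {}" and matching: "bipartite_matching R A (P1 \<union> P2)"
    using bipartite_matching_Un[OF U(2) T(2)] assms(3) by (auto simp: Un_absorb1)
  then have "card (P1 \<union> P2) = card P1 + card P2"
    using bipartite_matching_finite[OF U(2)] bipartite_matching_finite[OF T(2)] \<open>finite R\<close>
    by (simp add: card_Un_disjoint)
  ultimately show "int (card A) - deficiency R S1 \<le> int (card (P1 \<union> P2))"
    using T(3) by (simp add: deficiency_def)
  show "bipartite_matching R A (P1 \<union> P2)" by (fact matching)
qed

text \<open>Induction step when no nonempty proper subset attains the maximal deficiency: then every
  such subset has deficiency at least one below the maximum, which absorbs the loss of the target
  \<open>b\<close> after matching \<open>a\<close> to it.\<close>
lemma bipartite_matching_insert_deficiency:
  assumes "finite A" "finite R" "(a, b) \<in> R" "a \<in> A"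
    and max: "\<And>S. S \<subseteq> A \<Longrightarrow> deficiency R S \<le> deficiency R S0"
    and strict: "\<And>S. S \<noteq> {} \<Longrightarrow> S \<subset> A \<Longrightarrow> deficiency R S \<noteq> deficiency R S0"
    and U: "U \<subseteq> A - {a}"
    and P: "bipartite_matching {p \<in> R. snd p \<noteq> b} (A - {a}) P"
      "int (card (A - {a})) - deficiency {p \<in> R. snd p \<noteq> b} U \<le> int (card P)"
  shows "int (card A) - deficiency R S0 \<le> int (card (insert (a, b) P))"
proof -
  have "finite P" using bipartite_matching_finite[OF P(1)] \<open>finite R\<close> by simp
  then have "card (insert (a, b) P) = card P + 1"
    using bipartite_matching_insert(2)[OF P(1) assms(3,4)] by simp
  moreover have "card A = card (A - {a}) + 1" using assms(1,4) card_Diff1_less by fastforce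
  moreover have "deficiency R U \<le> deficiency R S0 - (if U = {} then 0 else 1)"
  proof (cases "U = {}")
    case False
    have "U \<subset> A" using U \<open>a \<in> A\<close> by blast
    then have "deficiency R U \<le> deficiency R S0" "deficiency R U \<noteq> deficiency R S0"
      using max[of U] strict[of U] False by auto
    then show ?thesis using False by simp
  qed (use max[of "{}"] in simp)
  moreover have "deficiency {p \<in> R. snd p \<noteq> b} U \<le> deficiency R U + (if U = {} then 0 else 1)"
    using deficiency_remove_target[OF \<open>finite R\<close>, of b U] by (auto simp: deficiency_def)
  ultimately show ?thesis using P(2) by linarith
qed

theorem bipartite_matching_deficiency:
  assumes "finite A" "finite R"
  shows "\<exists>S P. S \<subseteq> A \<and> bipartite_matching R A P \<and> int (card A) - deficiency R S \<le> int (card P)"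
  using assms
proof (induction "card A" arbitrary: A R rule: less_induct)
  case less
  obtain S0 where S0: "S0 \<subseteq> A" and max: "\<And>S. S \<subseteq> A \<Longrightarrow> deficiency R S \<le> deficiency R S0"
    using ex_max_deficiency[OF \<open>finite A\<close>] by blast
  show ?case
  proof (cases "\<exists>S1. S1 \<noteq> {} \<and> S1 \<subset> A \<and> deficiency R S1 = deficiency R S0")
    case True
    then obtain S1 where S1: "S1 \<noteq> {}" "S1 \<subset> A" "deficiency R S1 = deficiency R S0" by blast
    have "finite S1" "finite (A - S1)" using S1(2) \<open>finite A\<close> finite_subset by blast+
    have "card S1 < card A" using \<open>finite A\<close> S1(2) by (rule psubset_card_mono)
    from less.hyps[OF this \<open>finite S1\<close> \<open>finite R\<close>]
    obtain U P1 where U: "U \<subseteq> S1" "bipartite_matching R S1 P1"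
        "int (card S1) - deficiency R U \<le> int (card P1)"
      by blast
    have "card (A - S1) < card A" using \<open>finite A\<close> S1(1,2) by (intro psubset_card_mono) blast+
    from less.hyps[OF this \<open>finite (A - S1)\<close>, of "{p \<in> R. snd p \<notin> R `` S1}"] \<open>finite R\<close>
    obtain T P2 where T: "T \<subseteq> A - S1" "bipartite_matching {p \<in> R. snd p \<notin> R `` S1} (A - S1) P2"
        "int (card (A - S1)) - deficiency {p \<in> R. snd p \<notin> R `` S1} T \<le> int (card P2)"
      by auto
    have "S1 \<subseteq> A" using S1(2) by blast
    from bipartite_matching_Un_deficiency[OF less.prems this _ U T] max S1(3)
    show ?thesis by (intro exI[of _ S1] exI[of _ "P1 \<union> P2"]) (simp add: \<open>S1 \<subseteq> A\<close>)
  next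
    case no_tight: False
    show ?thesis
    proof (cases "R `` A = {}")
      case True
      moreover have "bipartite_matching R A {}" by (simp add: bipartite_matching_def)
      ultimately show ?thesis by (intro exI[of _ A] exI[of _ "{}"]) (simp add: deficiency_def)
    next
      case False
      then obtain a b where ab: "(a, b) \<in> R" "a \<in> A" by blast
      have "card (A - {a}) < card A" using \<open>finite A\<close> ab(2) by (rule card_Diff1_less)
      from less.hyps[OF this, of "{p \<in> R. snd p \<noteq> b}"] \<open>finite A\<close> \<open>finite R\<close>
      obtain U P where U: "U \<subseteq> A - {a}" "bipartite_matching {p \<in> R. snd p \<noteq> b} (A - {a}) P"
          "int (card (A - {a})) - deficiency {p \<in> R. snd p \<noteq> b} U \<le> int (card P)"
        by auto
      have "int (card A) - deficiency R S0 \<le> int (card (insert (a, b) P))"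
        using no_tight by (intro bipartite_matching_insert_deficiency[OF less.prems ab max _ U]) auto
      then show ?thesis
        using bipartite_matching_insert(1)[OF U(2) ab] S0 by blast
    qed
  qed
qed

definition cover_relation :: "'a set \<Rightarrow> 'a set set \<Rightarrow> ('a \<times> 'a) set" where
  "cover_relation C E = {(c, i). c \<in> C \<and> i \<notin> C \<and> {c, i} \<in> E}"

lemma graph_edgeE:
  assumes "graph V E" "e \<in> E"
  obtains u v where "e = {u, v}" "u \<noteq> v" "u \<in> V" "v \<in> V"
  using assms unfolding graph_def by blast

lemma graph_edge_subset: "graph V E \<Longrightarrow> e \<in> E \<Longrightarrow> e \<subseteq> V"
  by (elim graph_edgeE) auto

lemma graph_finite_edges:
  assumes "graph V E"
  shows "finite E"
proof (rule finite_subset)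
  show "E \<subseteq> Pow V" using graph_edge_subset[OF assms] by blast
  show "finite (Pow V)" using assms by (simp add: graph_def)
qed

lemma cover_relation_subset:
  assumes "graph V E"
  shows "cover_relation C E \<subseteq> C \<times> (V - C)"
  unfolding cover_relation_def by (auto dest: graph_edge_subset[OF assms])

lemma matching_of_bipartite_matching:
  assumes "bipartite_matching (cover_relation C E) C P"
  shows "matching E ((\<lambda>p. {fst p, snd p}) ` P)" and "card ((\<lambda>p. {fst p, snd p}) ` P) = card P"
proof -
  let ?edge = "\<lambda>p. {fst p, snd p}"
  have P: "P \<subseteq> cover_relation C E" "inj_on fst P" "inj_on snd P"
    using assms by (auto simp: bipartite_matching_def)
  have disjoint: "?edge p \<inter> ?edge q = {}" if "p \<in> P" "q \<in> P" "p \<noteq> q" for p q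
  proof -
    have "fst p \<noteq> fst q" "snd p \<noteq> snd q"
      using inj_on_contraD[OF P(2) that(3,1,2)] inj_on_contraD[OF P(3) that(3,1,2)] by auto
    moreover have "fst p \<in> C" "fst q \<in> C" "snd p \<notin> C" "snd q \<notin> C"
      using P(1) that(1,2) by (auto simp: cover_relation_def)
    ultimately show ?thesis by auto
  qed
  have "?edge ` P \<subseteq> E" using P(1) by (auto simp: cover_relation_def)
  moreover have "e1 \<inter> e2 = {}" if e: "e1 \<in> ?edge ` P" "e2 \<in> ?edge ` P" "e1 \<noteq> e2" for e1 e2
  proof -
    obtain p q where "p \<in> P" "q \<in> P" "e1 = ?edge p" "e2 = ?edge q" using e(1,2) by blast
    then show ?thesis using disjoint[of p q] e(3) by auto
  qed
  ultimately show "matching E (?edge ` P)" unfolding matching_def by blast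
  have "inj_on ?edge P"
  proof (rule inj_onI)
    fix p q assume "p \<in> P" "q \<in> P" "?edge p = ?edge q"
    then show "p = q" using disjoint[of p q] by auto
  qed
  then show "card (?edge ` P) = card P" by (rule card_image)
qed

definition half_integral_cover :: "'a set \<Rightarrow> 'a set \<Rightarrow> 'a set \<Rightarrow> 'a \<Rightarrow> real" where
  "half_integral_cover C S N v = of_bool (v \<in> C - S) + of_bool (v \<in> S \<union> N) / 2"

lemma lp_feasible_half_integral_cover:
  assumes "vertex_cover V E C" "S \<subseteq> C"
  shows "lp_feasible V E (half_integral_cover C S (cover_relation C E `` S))"
proof -
  let ?N = "cover_relation C E `` S" and ?x = "half_integral_cover C S (cover_relation C E `` S)"
  have N: "?N \<inter> C = {}" by (auto simp: cover_relation_def)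
  have edge: "?x u + ?x v \<ge> 1" if "{u, v} \<in> E" "u \<in> C" for u v
  proof (cases "u \<in> S")
    case True
    then have "v \<in> C \<or> v \<in> ?N" using that by (auto simp: cover_relation_def)
    then show ?thesis using True N assms(2) by (auto simp: half_integral_cover_def)
  qed (auto simp: half_integral_cover_def that)
  show ?thesis
    unfolding lp_feasible_def
  proof (intro conjI allI impI ballI)
    fix u v assume "{u, v} \<in> E"
    moreover from this have "u \<in> C \<or> v \<in> C" using assms(1) by (auto simp: vertex_cover_def)
    ultimately show "1 \<le> ?x u + ?x v" using edge[of u v] edge[of v u] by (auto simp: insert_commute)
  next
    fix v
    show "0 \<le> ?x v" "?x v \<le> 1" using N assms(2) by (auto simp: half_integral_cover_def)
  qed
qed

lemma sum_half_integral_cover: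
  assumes "finite V" "C \<subseteq> V" "S \<subseteq> C" "N \<subseteq> V - C"
  shows "(\<Sum>v\<in>V. half_integral_cover C S N v) = real (card C) - card S / 2 + card N / 2"
proof -
  have count: "(\<Sum>v\<in>V. of_bool (v \<in> X) :: real) = card X" if "X \<subseteq> V" for X
    using sum_of_bool_eq[OF assms(1) assms(1), of "\<lambda>v. v \<in> X"] that by (simp add: Int_absorb1)
  have "card (S \<union> N) = card S + card N"
    using assms by (intro card_Un_disjoint) (auto intro: finite_subset)
  moreover have "card (C - S) = card C - card S"
    using assms(1-3) by (intro card_Diff_subset) (auto intro: finite_subset)
  moreover have "card S \<le> card C" using assms(1-3) by (intro card_mono) (auto intro: finite_subset)
  moreover have "C - S \<subseteq> V" "S \<union> N \<subseteq> V" using assms(2-4) by auto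
  ultimately show ?thesis
    unfolding half_integral_cover_def sum.distrib sum_divide_distrib[symmetric]
    by (simp only: count) (simp add: of_nat_diff)
qed

lemma OPT_attained:
  assumes "graph V E"
  obtains C where "vertex_cover V E C" "card C = OPT V E"
proof -
  have "finite V" using assms by (simp add: graph_def)
  have "e \<inter> V \<noteq> {}" if "e \<in> E" for e using assms that by (elim graph_edgeE) auto
  then have "vertex_cover V E V" by (simp add: vertex_cover_def)
  moreover have "{card C | C. vertex_cover V E C} \<subseteq> {..card V}"
    using \<open>finite V\<close> by (auto simp: vertex_cover_def card_mono)
  ultimately have "OPT V E \<in> {card C | C. vertex_cover V E C}"
    unfolding OPT_def by (intro Min_in) (auto intro: finite_subset)
  then show thesis by (auto intro: that)
qed

lemma card_matching_le_MM:
  assumes "graph V E" "matching E M"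
  shows "card M \<le> MM V E"
proof -
  have "{card M | M. matching E M} \<subseteq> {..card E}"
    using graph_finite_edges[OF assms(1)] by (auto simp: matching_def card_mono)
  then show ?thesis
    unfolding MM_def using assms(2) by (intro Max_ge) (auto intro: finite_subset)
qed

lemma LP_le_feasible:
  assumes "lp_feasible V E x"
  shows "LP V E \<le> (\<Sum>v\<in>V. x v)"
  unfolding LP_def
proof (rule cInf_lower)
  show "bdd_below {\<Sum>v\<in>V. x v | x. lp_feasible V E x}"
    by (rule bdd_belowI[of _ 0]) (auto simp: lp_feasible_def intro: sum_nonneg)
qed (use assms in blast)

theorem lemma1:
  fixes V :: "'a set" and E :: "'a set set"
  assumes "graph V E"
  shows "real (OPT V E) \<ge> 2 * LP V E - real (MM V E)"
proof -
  obtain C where C: "vertex_cover V E C" "card C = OPT V E" using OPT_attained[OF assms] .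
  have "finite V" "C \<subseteq> V" using assms C(1) by (simp_all add: graph_def vertex_cover_def)
  then have "finite C" by (rule finite_subset[rotated])
  define R where "R = cover_relation C E"
  have R: "R \<subseteq> C \<times> (V - C)" unfolding R_def by (rule cover_relation_subset[OF assms])
  then have "finite R" using \<open>finite V\<close> \<open>finite C\<close> by (blast intro: finite_subset)
  from bipartite_matching_deficiency[OF \<open>finite C\<close> this]
  obtain S P where S: "S \<subseteq> C" and P: "bipartite_matching R C P"
      and "int (card C) - deficiency R S \<le> int (card P)"
    by blast
  then have "card C + card (R `` S) \<le> card P + card S" by (simp add: deficiency_def)
  then have deficiency: "real (card C) + card (R `` S) \<le> real (card P) + card S"
    by (metis of_nat_add of_nat_mono)
  have "card P \<le> MM V E"
    using matching_of_bipartite_matching[OF P[unfolded R_def]] card_matching_le_MM[OF assms] by metis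
  then have matching: "real (card P) \<le> MM V E" by simp
  have "LP V E \<le> (\<Sum>v\<in>V. half_integral_cover C S (R `` S) v)"
    unfolding R_def by (rule LP_le_feasible[OF lp_feasible_half_integral_cover[OF C(1) S]])
  also have "\<dots> = real (card C) - card S / 2 + card (R `` S) / 2"
    using R by (intro sum_half_integral_cover[OF \<open>finite V\<close> \<open>C \<subseteq> V\<close> S]) blast
  finally show ?thesis
    unfolding C(2)[symmetric] using deficiency matching by linarith
qed

end
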